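(* Let $G$ be a non-abelian subgroup of $\mathcal{H}(n,\mathbb{C})$ with $\Lambda_G\not\subset\mathbb{R}$ and $G\subset\mathcal{SR}_n$. Then $G$ has a dense orbit in $\mathbb{C}^n$ if and only if $\overline{G_1(0)}=\mathbb{C}^n$.
   Context: $\mathcal{H}(n,\mathbb{C})$ is the group of all maps $z\mapsto\lambda z+b$ of $\mathbb{C}^n$ with $\lambda\in\mathbb{C}^*$, $b\in\mathbb{C}^n$ ($\lambda$ = ratio); $\mathcal{T}_n$ = subgroup of translations. $H_2=(\frac{\pi}{2}+\pi\mathbb{Z})\cup\pi\mathbb{Z}$, $F_2=\{e^{ix}:x\in H_2\}$, $H_3=(\frac{\pi}{3}+\pi\mathbb{Z})\cup(-\frac{\pi}{3}+\pi\mathbb{Z})\cup\pi\mathbb{Z}$, $F_3=\{e^{ix}:x\in H_3\}$; $\mathcal{S}_i\mathcal{R}_n=\{z\mapsto\lambda z+b:\lambda\in F_i, b\in\mathbb{C}^n\}$, $\mathcal{SR}_n=\mathcal{S}_2\mathcal{R}_n\cup\mathcal{S}_3\mathcal{R}_n$. For a subgroup $G$: $\Lambda_G$ is the set of ratios of elements of $G$; $G_1=G\cap\mathcal{T}_n$ and $G_1(0)=\{f(0):f\in G_1\}$. *)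

theory Defs
  imports "HOL-Analysis.Analysis"
begin

text \<open>C^n is modelled as complex ^ 'n (dimension n = CARD('n), arbitrary).
  The map z \<mapsto> lam z + b.\<close>
definition affmap :: "complex \<Rightarrow> complex ^ 'n \<Rightarrow> (complex ^ 'n \<Rightarrow> complex ^ 'n)" where
  "affmap lam b = (\<lambda>z. lam *s z + b)"

definition Hgrp :: "(complex ^ 'n \<Rightarrow> complex ^ 'n) set" where
  "Hgrp = {affmap lam b | lam b. lam \<noteq> 0}"

definition Transl :: "(complex ^ 'n \<Rightarrow> complex ^ 'n) set" where
  "Transl = {affmap 1 b | b. True}"

definition is_subgroup_H :: "(complex ^ 'n \<Rightarrow> complex ^ 'n) set \<Rightarrow> bool" where
  "is_subgroup_H G \<longleftrightarrow> G \<subseteq> Hgrp \<and> id \<in> G \<and> (\<forall>f\<in>G. \<forall>g\<in>G. f \<circ> g \<in> G) \<and> (\<forall>f\<in>G. inv f \<in> G)"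

definition non_abelian :: "(complex ^ 'n \<Rightarrow> complex ^ 'n) set \<Rightarrow> bool" where
  "non_abelian G \<longleftrightarrow> (\<exists>f\<in>G. \<exists>g\<in>G. f \<circ> g \<noteq> g \<circ> f)"

definition ratios :: "(complex ^ 'n \<Rightarrow> complex ^ 'n) set \<Rightarrow> complex set" where
  "ratios G = {lam. \<exists>b. affmap lam b \<in> G}"

definition H2 :: "real set" where
  "H2 = {pi/2 + pi * of_int k | k. True} \<union> {pi * of_int k | k. True}"
definition F2 :: "complex set" where
  "F2 = {exp (\<i> * of_real x) | x. x \<in> H2}"
definition H3 :: "real set" where
  "H3 = {pi/3 + pi * of_int k | k. True} \<union> {- pi/3 + pi * of_int k | k. True} \<union> {pi * of_int k | k. True}"
definition F3 :: "complex set" where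
  "F3 = {exp (\<i> * of_real x) | x. x \<in> H3}"

definition S2R :: "(complex ^ 'n \<Rightarrow> complex ^ 'n) set" where
  "S2R = {affmap lam b | lam b. lam \<in> F2}"
definition S3R :: "(complex ^ 'n \<Rightarrow> complex ^ 'n) set" where
  "S3R = {affmap lam b | lam b. lam \<in> F3}"
definition SR :: "(complex ^ 'n \<Rightarrow> complex ^ 'n) set" where
  "SR = S2R \<union> S3R"

definition G1 :: "(complex ^ 'n \<Rightarrow> complex ^ 'n) set \<Rightarrow> (complex ^ 'n \<Rightarrow> complex ^ 'n) set" where
  "G1 G = G \<inter> Transl"
definition G1_0 :: "(complex ^ 'n \<Rightarrow> complex ^ 'n) set \<Rightarrow> (complex ^ 'n) set" where
  "G1_0 G = {f 0 | f. f \<in> G1 G}"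

definition orbit :: "(complex ^ 'n \<Rightarrow> complex ^ 'n) set \<Rightarrow> complex ^ 'n \<Rightarrow> (complex ^ 'n) set" where
  "orbit G z = {f z | f. f \<in> G}"

definition has_dense_orbit :: "(complex ^ 'n \<Rightarrow> complex ^ 'n) set \<Rightarrow> bool" where
  "has_dense_orbit G \<longleftrightarrow> (\<exists>z. closure (orbit G z) = UNIV)"

end

theory Submission
  imports Defs
begin

(* Every ratio of a map in SR = S2R \<union> S3R lies in F2 \<union> F3, a set of
   12th roots of unity; hence a subgroup G \<subseteq> SR has only finitely many ratios.
   For any subgroup of H(n,C) with finitely many ratios the orbit of a point z is
   covered by finitely many translates p + G1(0): two maps with the same ratio differ
   by a translation of G.  The closure H of G1(0) is a closed additive subgroup, so
   if the orbit is dense then finitely many translates of H cover C^n; the complement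
   of H is then a finite union of closed translates, H is clopen, hence H = C^n. *)

definition add_subgroup :: "'a::ab_group_add set \<Rightarrow> bool" where
  "add_subgroup S \<longleftrightarrow> 0 \<in> S \<and> (\<forall>a\<in>S. \<forall>b\<in>S. a + b \<in> S) \<and> (\<forall>a\<in>S. - a \<in> S)"

lemma add_subgroup_closure:
  fixes S :: "'a::real_normed_vector set"
  assumes "add_subgroup S"
  shows "add_subgroup (closure S)"
proof -
  have "S + S \<subseteq> S"
    using assms unfolding add_subgroup_def by (auto simp: set_plus_def)
  then have sums: "closure S + closure S \<subseteq> closure S"
    using closure_sum closure_mono by blast
  have "((*\<^sub>R) (-1)) ` S \<subseteq> S"
    using assms unfolding add_subgroup_def by auto
  then have "((*\<^sub>R) (-1)) ` closure S \<subseteq> closure S"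
    unfolding closure_scaleR by (rule closure_mono)
  then have negs: "- a \<in> closure S" if "a \<in> closure S" for a
    using that by force
  have "a + b \<in> closure S" if "a \<in> closure S" "b \<in> closure S" for a b
    using sums set_plus_intro[OF that] by blast
  moreover have "0 \<in> closure S"
    using assms closure_subset unfolding add_subgroup_def by blast
  ultimately show ?thesis
    unfolding add_subgroup_def using negs by blast
qed

text \<open>A closed additive subgroup of which finitely many translates cover the whole
  (connected) space is the whole space: its complement is the finite union of the
  translates not meeting it, so it is clopen.\<close>
lemma add_subgroup_finite_cover_UNIV:
  fixes H :: "'a::real_normed_vector set"
  assumes H: "add_subgroup H" "closed H"
    and P: "finite P" "(\<Union>p\<in>P. (+) p ` H) = UNIV"
  shows "H = UNIV"
proof -
  have add: "a + b \<in> H" if "a \<in> H" "b \<in> H" for a b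
    using H(1) that unfolding add_subgroup_def by blast
  have neg: "- a \<in> H" if "a \<in> H" for a
    using H(1) that unfolding add_subgroup_def by blast
  have compl: "- H = (\<Union>p\<in>P - H. (+) p ` H)"
  proof (intro equalityI subsetI)
    fix x assume "x \<in> - H"
    moreover obtain p h where "p \<in> P" "h \<in> H" "x = p + h"
      using P(2) by blast
    ultimately show "x \<in> (\<Union>p\<in>P - H. (+) p ` H)"
      using add by blast
  next
    fix x assume "x \<in> (\<Union>p\<in>P - H. (+) p ` H)"
    then obtain p h where ph: "p \<notin> H" "h \<in> H" "x = p + h"
      by blast
    have "x \<notin> H"
    proof
      assume "x \<in> H"
      then have "x + - h \<in> H" using add neg ph(2) by blast
      with ph show False by simp
    qed
    then show "x \<in> - H" by simp
  qed
  have "closed (- H)"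
    unfolding compl using P(1) H(2) by (intro closed_UN) (auto simp: closed_translation)
  then have "open H" by (simp add: open_closed)
  moreover have "H \<noteq> {}" using H(1) unfolding add_subgroup_def by blast
  ultimately show ?thesis using H(2) clopen by blast
qed

lemma affmap_apply: "affmap l b z = l *s z + b"
  by (simp add: affmap_def)

lemma affmap_inj:
  assumes "affmap l b = (affmap m c :: complex ^ 'n \<Rightarrow> complex ^ 'n)"
  shows "l = m \<and> b = c"
proof -
  have bc: "b = c" using fun_cong[OF assms, of 0] by (simp add: affmap_def)
  have "affmap l b (\<chi> i. 1) $ undefined = affmap m c (\<chi> i. 1) $ (undefined::'n)"
    using assms by simp
  then have "l = m" using bc by (simp add: affmap_def)
  with bc show ?thesis by simp
qed

lemma affmap_comp: "affmap l b \<circ> affmap m c = affmap (l * m) (l *s c + b)"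
  by (rule ext) (simp add: affmap_def vector_add_ldistrib vector_smult_assoc algebra_simps)

lemma affmap_id: "affmap 1 0 = id"
  by (rule ext) (simp add: affmap_def)

lemma inv_affmap:
  assumes "l \<noteq> 0"
  shows "inv (affmap l b) = affmap (1 / l) (- ((1 / l) *s b))"
proof (rule inv_unique_comp)
  show "affmap l b \<circ> affmap (1 / l) (- ((1 / l) *s b)) = id"
    using assms by (simp add: affmap_comp affmap_id[symmetric] vector_smult_assoc vector_smult_rneg)
  show "affmap (1 / l) (- ((1 / l) *s b)) \<circ> affmap l b = id"
    using assms by (simp add: affmap_comp affmap_id[symmetric] vector_smult_assoc vector_smult_rneg)
qed

lemma affmap_same_ratio_quotient:
  assumes "l \<noteq> 0"
  shows "affmap l c \<circ> inv (affmap l b) = affmap 1 (c - b)"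
proof -
  have "l *s (- ((1 / l) *s b)) + c = c - b"
    using assms by (simp add: vector_smult_rneg vector_smult_assoc)
  then show ?thesis
    using assms by (simp add: inv_affmap affmap_comp)
qed

text \<open>Every element of F2 and F3 is a 12th root of unity, since 12 x is an integer
  multiple of 2 pi for every x in H2 or H3.\<close>
lemma F2_F3_roots_of_unity: "F2 \<union> F3 \<subseteq> {z::complex. z ^ 12 = 1}"
proof
  fix z assume "z \<in> F2 \<union> F3"
  then obtain x where z: "z = exp (\<i> * of_real x)" and x: "x \<in> H2 \<union> H3"
    unfolding F2_def F3_def by blast
  obtain k :: int where k: "12 * x = 2 * pi * of_int k"
  proof -
    from x consider (a) k where "x = pi/2 + pi * of_int k" | (b) k where "x = pi * of_int k"
      | (c) k where "x = pi/3 + pi * of_int k" | (d) k where "x = - pi/3 + pi * of_int k"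
      unfolding H2_def H3_def by blast
    then show ?thesis
    proof cases
      case (a k) then show ?thesis using that[of "3 + 6 * k"] by (simp add: algebra_simps)
    next
      case (b k) then show ?thesis using that[of "6 * k"] by (simp add: algebra_simps)
    next
      case (c k) then show ?thesis using that[of "2 + 6 * k"] by (simp add: algebra_simps)
    next
      case (d k) then show ?thesis using that[of "-2 + 6 * k"] by (simp add: algebra_simps)
    qed
  qed
  have "z ^ 12 = exp (\<i> * of_real (12 * x))"
    unfolding z by (simp add: exp_of_nat_mult[symmetric] algebra_simps)
  also have "\<dots> = exp ((2 * of_int k * of_real pi) * \<i>)"
    unfolding k by (simp add: algebra_simps)
  also have "\<dots> = 1"
    using exp_integer_2pi[of "of_int k"] by simp
  finally show "z \<in> {z::complex. z ^ 12 = 1}" by simp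
qed

lemma ratios_SR_subset:
  assumes "G \<subseteq> SR"
  shows "ratios G \<subseteq> F2 \<union> F3"
proof
  fix l assume "l \<in> ratios G"
  then obtain b where "affmap l b \<in> G" unfolding ratios_def by blast
  then have "affmap l b \<in> SR" using assms by blast
  then obtain m c where "affmap l b = affmap m c" "m \<in> F2 \<union> F3"
    unfolding SR_def S2R_def S3R_def by blast
  then show "l \<in> F2 \<union> F3" using affmap_inj by metis
qed

lemma finite_ratios_SR:
  assumes "G \<subseteq> SR"
  shows "finite (ratios G)"
proof (rule finite_subset[OF ratios_SR_subset[OF assms]])
  show "finite (F2 \<union> F3)"
    by (rule finite_subset[OF F2_F3_roots_of_unity]) (rule finite_roots_unity, simp)
qed

lemma G1_0_eq: "G1_0 G = {b. affmap 1 b \<in> G}"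
proof (intro equalityI subsetI)
  fix x assume "x \<in> G1_0 G"
  then obtain b where "affmap 1 b \<in> G" "x = affmap 1 b 0"
    unfolding G1_0_def G1_def Transl_def by blast
  then show "x \<in> {b. affmap 1 b \<in> G}" by (simp add: affmap_apply)
next
  fix x assume "x \<in> {b. affmap 1 b \<in> G}"
  then have "affmap 1 x \<in> G1 G" "x = affmap 1 x 0"
    unfolding G1_def Transl_def by (auto simp: affmap_apply)
  then show "x \<in> G1_0 G" unfolding G1_0_def by blast
qed

lemma add_subgroup_G1_0:
  assumes "is_subgroup_H G"
  shows "add_subgroup (G1_0 G)"
proof -
  have "id \<in> G" and comp: "\<And>f g. f \<in> G \<Longrightarrow> g \<in> G \<Longrightarrow> f \<circ> g \<in> G"
    and inv: "\<And>f. f \<in> G \<Longrightarrow> inv f \<in> G"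
    using assms unfolding is_subgroup_H_def by auto
  then show ?thesis
    unfolding add_subgroup_def G1_0_eq
    using comp[of "affmap 1 _" "affmap 1 _"] inv[of "affmap 1 _"]
    by (auto simp: affmap_id affmap_comp inv_affmap add.commute)
qed

text \<open>If G has only finitely many ratios, every orbit lies in finitely many
  translates of G1(0): fixing one map of each ratio, any other map of that ratio
  differs from it by a translation belonging to G.\<close>
lemma orbit_finite_cover:
  assumes G: "is_subgroup_H G" and fin: "finite (ratios G)"
  obtains P where "finite P" "orbit G z \<subseteq> (\<Union>p\<in>P. (+) p ` G1_0 G)"
proof -
  have sg: "G \<subseteq> Hgrp" "\<And>f g. f \<in> G \<Longrightarrow> g \<in> G \<Longrightarrow> f \<circ> g \<in> G" "\<And>f. f \<in> G \<Longrightarrow> inv f \<in> G"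
    using G unfolding is_subgroup_H_def by auto
  define bs where "bs = (\<lambda>l. SOME b. affmap l b \<in> G)"
  have bs: "affmap l (bs l) \<in> G" if "l \<in> ratios G" for l
    using that unfolding ratios_def bs_def by (metis (mono_tags, lifting) mem_Collect_eq someI)
  define P where "P = (\<lambda>l. l *s z + bs l) ` ratios G"
  have "orbit G z \<subseteq> (\<Union>p\<in>P. (+) p ` G1_0 G)"
  proof
    fix w assume "w \<in> orbit G z"
    then obtain g where g: "g \<in> G" "w = g z" unfolding orbit_def by blast
    then obtain l c where gl: "g = affmap l c" "l \<noteq> 0" using sg(1) unfolding Hgrp_def by blast
    have l: "l \<in> ratios G" using g gl unfolding ratios_def by blast
    have "affmap 1 (c - bs l) \<in> G"
      using sg(2,3) g(1) bs[OF l] affmap_same_ratio_quotient[OF gl(2)] gl(1) by metis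
    then have "c - bs l \<in> G1_0 G" by (simp add: G1_0_eq)
    moreover have "w = (l *s z + bs l) + (c - bs l)" using g gl by (simp add: affmap_def)
    moreover have "l *s z + bs l \<in> P" using l unfolding P_def by blast
    ultimately show "w \<in> (\<Union>p\<in>P. (+) p ` G1_0 G)" by blast
  qed
  moreover have "finite P" unfolding P_def using fin by simp
  ultimately show ?thesis using that by blast
qed

theorem dense_orbit_iff_translations_dense:
  fixes G :: "(complex ^ 'n \<Rightarrow> complex ^ 'n) set"
  assumes G: "is_subgroup_H G" and fin: "finite (ratios G)"
  shows "has_dense_orbit G \<longleftrightarrow> closure (G1_0 G) = UNIV"
proof
  assume "has_dense_orbit G"
  then obtain z where z: "closure (orbit G z) = UNIV"
    unfolding has_dense_orbit_def by blast
  define H where "H = closure (G1_0 G)"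
  obtain P where P: "finite P" "orbit G z \<subseteq> (\<Union>p\<in>P. (+) p ` G1_0 G)"
    using orbit_finite_cover[OF G fin] by blast
  then have "orbit G z \<subseteq> (\<Union>p\<in>P. (+) p ` H)"
    unfolding H_def using closure_subset by fastforce
  moreover have "closed (\<Union>p\<in>P. (+) p ` H)"
    using P(1) by (intro closed_UN) (auto simp: H_def closed_translation)
  ultimately have "closure (orbit G z) \<subseteq> (\<Union>p\<in>P. (+) p ` H)"
    by (rule closure_minimal)
  then have cover: "(\<Union>p\<in>P. (+) p ` H) = UNIV"
    unfolding z by (simp add: top_le)
  have "H = UNIV"
    using add_subgroup_closure[OF add_subgroup_G1_0[OF G]] closed_closure P(1) cover
    unfolding H_def by (rule add_subgroup_finite_cover_UNIV)
  then show "closure (G1_0 G) = UNIV"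
    unfolding H_def .
next
  assume "closure (G1_0 G) = UNIV"
  moreover have "G1_0 G \<subseteq> orbit G 0" unfolding G1_0_def G1_def orbit_def by blast
  ultimately have "closure (orbit G 0) = UNIV" using closure_mono by blast
  then show "has_dense_orbit G" unfolding has_dense_orbit_def by blast
qed

text \<open>Corollary 1.2: a group G \<subseteq> SR has finitely many ratios, so the criterion
  applies.\<close>
theorem corollary1p2:
  fixes G :: "(complex ^ 'n \<Rightarrow> complex ^ 'n) set"
  assumes "is_subgroup_H G"
    and "non_abelian G"
    and "\<not> ratios G \<subseteq> \<real>"
    and "G \<subseteq> SR"
  shows "has_dense_orbit G \<longleftrightarrow> closure (G1_0 G) = UNIV"
  using dense_orbit_iff_translations_dense[OF assms(1) finite_ratios_SR[OF assms(4)]] .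

end
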